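(* With the notation in the context, the following identity of linear endomorphisms of $\mathbb C^{\mathcal L(\Omega)}$ holds: $(q^2-1)\big(L_2(x_0)R_2(x_0)-R_2(x_0)L_2(x_0)\big)=(q^2-1)D_3(x_0)+D_4(x_0)-q^DD_1(x_0)^{-1}D_2(x_0)^{-1}$.
   Context: $\Omega$ is a $D$-dimensional vector space over a finite field $\mathbb F$ and $q=\sqrt{|\mathbb F|}$. $\mathcal L(\Omega)$ is the set of subspaces of $\Omega$ and $\mathbb C^{\mathcal L(\Omega)}$ the complex vector space with basis $\mathcal L(\Omega)$; $x'\subset\mathrel{\cdot} x$ means $x'\subseteq x$ with $\dim x'=\dim x-1$; $|y|$ denotes the cardinality of a subspace $y$ (so $|y|=q^{2\dim y}$). Fix subspaces $x_0,x_1$ with $\Omega=x_0\oplus x_1$; for $u\in\Omega$ write $u=u_0+u_1$ with $u_0\in x_0$, $u_1\in x_1$. For $x\in\mathcal L(\Omega)$ let $\tau(x):(x+x_0)/x_0\to x_0/(x\cap x_0)$ be the linear map $u+x_0\mapsto u_0+(x\cap x_0)$ ($u\in x$). Linear maps on $\mathbb C^{\mathcal L(\Omega)}$ are defined on the basis by: $L_1(x_0)x=\sum x'$ over $x'\subset\mathrel{\cdot} x$ with $x'\cap x_0=x\cap x_0$; $L_2(x_0)x=\sum x'$ over $x'\subset\mathrel{\cdot} x$ with $x'+x_0=x+x_0$; $R_1(x_0)x=\sum x'$ over $x\subset\mathrel{\cdot} x'$ with $x'\cap x_0=x\cap x_0$; $R_2(x_0)x=\sum x'$ over $x\subset\mathrel{\cdot}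 x'$ with $x'+x_0=x+x_0$; $D_1(x_0)x=q^{\dim(\Omega/x_0)-2\dim((x+x_0)/x_0)}x$; $D_2(x_0)x=q^{\dim x_0-2\dim(x\cap x_0)}x$; $D_3(x_0)x=\sum x'$ over $x'\in\mathcal L(\Omega)$ with $x'+x_0=x+x_0$, $x'\cap x_0=x\cap x_0$ and $\operatorname{rank}(\tau(x')-\tau(x))=1$; $D_4(x_0)x=\big(\frac{|x|+|x_0|}{|x\cap x_0|}-1\big)x$. *)

theory Defs
  imports Complex_Main
begin

text \<open>Omega is the whole type 'v.  Linear endomorphisms of
  C^{L(Omega)} are represented by their matrices with respect to the basis L(Omega):
  M y x is the coefficient of the basis vector y in M(x).\<close>

type_synonym 'v op = "'v set \<Rightarrow> 'v set \<Rightarrow> complex"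

definition subspaces :: "('f::field \<Rightarrow> 'v::ab_group_add \<Rightarrow> 'v) \<Rightarrow> 'v set set" where
  "subspaces sc = {x. module.subspace sc x}"

abbreviation vdim :: "('f::field \<Rightarrow> 'v::ab_group_add \<Rightarrow> 'v) \<Rightarrow> 'v set \<Rightarrow> nat" where
  "vdim sc \<equiv> vector_space.dim sc"

definition Dim :: "('f::field \<Rightarrow> 'v::ab_group_add \<Rightarrow> 'v) \<Rightarrow> nat" where
  "Dim sc = vdim sc (UNIV :: 'v set)"

definition qq :: "('f::{field,finite} \<Rightarrow> 'v::ab_group_add \<Rightarrow> 'v) \<Rightarrow> real" where
  "qq sc = sqrt (real (card (UNIV :: 'f set)))"

definition ssum :: "'v::ab_group_add set \<Rightarrow> 'v set \<Rightarrow> 'v set" where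
  "ssum x y = {a + b | a b. a \<in> x \<and> b \<in> y}"

definition covby :: "('f::field \<Rightarrow> 'v::ab_group_add \<Rightarrow> 'v) \<Rightarrow> 'v set \<Rightarrow> 'v set \<Rightarrow> bool" where
  "covby sc x' x \<longleftrightarrow> x' \<in> subspaces sc \<and> x \<in> subspaces sc \<and> x' \<subseteq> x \<and> vdim sc x' + 1 = vdim sc x"

definition ocomp :: "('f::field \<Rightarrow> 'v::ab_group_add \<Rightarrow> 'v) \<Rightarrow> 'v op \<Rightarrow> 'v op \<Rightarrow> 'v op" where
  "ocomp sc A B = (\<lambda>y x. \<Sum>z\<in>subspaces sc. A y z * B z x)"

definition oid :: "'v op" where
  "oid = (\<lambda>y x. if y = x then 1 else 0)"

definition oinv :: "('f::field \<Rightarrow> 'v::ab_group_add \<Rightarrow> 'v) \<Rightarrow> 'v op \<Rightarrow> 'v op" where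
  "oinv sc M = (THE N. (\<forall>y x. (y \<notin> subspaces sc \<or> x \<notin> subspaces sc) \<longrightarrow> N y x = 0) \<and>
      (\<forall>y\<in>subspaces sc. \<forall>x\<in>subspaces sc. ocomp sc N M y x = oid y x \<and> ocomp sc M N y x = oid y x))"

definition proj0 :: "'v::ab_group_add set \<Rightarrow> 'v set \<Rightarrow> 'v \<Rightarrow> 'v" where
  "proj0 x0 x1 u = (THE a. a \<in> x0 \<and> u - a \<in> x1)"

definition coset :: "'v::ab_group_add set \<Rightarrow> 'v \<Rightarrow> 'v set" where
  "coset W u = {u + w | w. w \<in> W}"

text \<open>tau(x) : (x + x0)/x0 \<rightarrow> x0/(x \<inter> x0), u + x0 \<mapsto> u0 + (x \<inter> x0) for u \<in> x;
  elements of quotients are represented as cosets\<close>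
definition tau :: "'v::ab_group_add set \<Rightarrow> 'v set \<Rightarrow> 'v set \<Rightarrow> 'v set \<Rightarrow> 'v set" where
  "tau x0 x1 x C = (let u = (SOME u. u \<in> x \<and> coset x0 u = C)
                    in coset (x \<inter> x0) (proj0 x0 x1 u))"

definition qdom :: "'v::ab_group_add set \<Rightarrow> 'v set \<Rightarrow> 'v set set" where
  "qdom x0 x = {coset x0 u | u. u \<in> x}"

definition tau_diff :: "'v::ab_group_add set \<Rightarrow> 'v set \<Rightarrow> 'v set \<Rightarrow> 'v set \<Rightarrow> 'v set \<Rightarrow> 'v set" where
  "tau_diff x0 x1 x' x C = {a - b | a b. a \<in> tau x0 x1 x' C \<and> b \<in> tau x0 x1 x C}"

text \<open>rank of tau(x') - tau(x): dimension of its image, a subspace of x0/(x \<inter> x0);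
  computed as dim U - dim (x \<inter> x0) where U \<subseteq> x0 is the preimage of the image
  under the quotient map x0 \<rightarrow> x0/(x \<inter> x0) (i.e. the union of the image cosets)\<close>
definition tau_rank :: "('f::field \<Rightarrow> 'v::ab_group_add \<Rightarrow> 'v) \<Rightarrow> 'v set \<Rightarrow> 'v set \<Rightarrow> 'v set \<Rightarrow> 'v set \<Rightarrow> nat" where
  "tau_rank sc x0 x1 x' x =
     vdim sc (\<Union>C\<in>qdom x0 x. tau_diff x0 x1 x' x C) - vdim sc (x \<inter> x0)"

definition opL1 :: "('f::field \<Rightarrow> 'v::ab_group_add \<Rightarrow> 'v) \<Rightarrow> 'v set \<Rightarrow> 'v op" where
  "opL1 sc x0 = (\<lambda>y x. if covby sc y x \<and> y \<inter> x0 = x \<inter> x0 then 1 else 0)"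

definition opL2 :: "('f::field \<Rightarrow> 'v::ab_group_add \<Rightarrow> 'v) \<Rightarrow> 'v set \<Rightarrow> 'v op" where
  "opL2 sc x0 = (\<lambda>y x. if covby sc y x \<and> ssum y x0 = ssum x x0 then 1 else 0)"

definition opR1 :: "('f::field \<Rightarrow> 'v::ab_group_add \<Rightarrow> 'v) \<Rightarrow> 'v set \<Rightarrow> 'v op" where
  "opR1 sc x0 = (\<lambda>y x. if covby sc x y \<and> y \<inter> x0 = x \<inter> x0 then 1 else 0)"

definition opR2 :: "('f::field \<Rightarrow> 'v::ab_group_add \<Rightarrow> 'v) \<Rightarrow> 'v set \<Rightarrow> 'v op" where
  "opR2 sc x0 = (\<lambda>y x. if covby sc x y \<and> ssum y x0 = ssum x x0 then 1 else 0)"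

definition opD1 :: "('f::{field,finite} \<Rightarrow> 'v::ab_group_add \<Rightarrow> 'v) \<Rightarrow> 'v set \<Rightarrow> 'v op" where
  "opD1 sc x0 = (\<lambda>y x. if y = x \<and> x \<in> subspaces sc then
      complex_of_real (qq sc powr real_of_int
        ((int (Dim sc) - int (vdim sc x0)) - 2 * (int (vdim sc (ssum x x0)) - int (vdim sc x0))))
      else 0)"

definition opD2 :: "('f::{field,finite} \<Rightarrow> 'v::ab_group_add \<Rightarrow> 'v) \<Rightarrow> 'v set \<Rightarrow> 'v op" where
  "opD2 sc x0 = (\<lambda>y x. if y = x \<and> x \<in> subspaces sc then
      complex_of_real (qq sc powr real_of_int (int (vdim sc x0) - 2 * int (vdim sc (x \<inter> x0))))
      else 0)"

definition opD3 :: "('f::field \<Rightarrow> 'v::ab_group_add \<Rightarrow> 'v) \<Rightarrow> 'v set \<Rightarrow> 'v set \<Rightarrow> 'v op" where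
  "opD3 sc x0 x1 = (\<lambda>y x. if y \<in> subspaces sc \<and> x \<in> subspaces sc \<and> ssum y x0 = ssum x x0 \<and>
      y \<inter> x0 = x \<inter> x0 \<and> tau_rank sc x0 x1 y x = 1 then 1 else 0)"

definition opD4 :: "('f::field \<Rightarrow> 'v::ab_group_add \<Rightarrow> 'v) \<Rightarrow> 'v set \<Rightarrow> 'v op" where
  "opD4 sc x0 = (\<lambda>y x. if y = x \<and> x \<in> subspaces sc then
      (of_nat (card x) + of_nat (card x0)) / of_nat (card (x \<inter> x0)) - 1 else 0)"

end

theory Submission
  imports Defs "HOL-Library.Cardinality"
begin

(* Compare the two sides entry by entry in the basis L(Omega); recall q^2 = |F|.
   The (y, x) entry of L2 R2 counts the common upper covers z of x and y with
   z + x0 = x + x0 = y + x0, that of R2 L2 the common lower covers with this property.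
   For y <> x the only candidates are x + y and x \<inter> y.  They occur exactly when x and y
   are adjacent (equal dimension, meeting in a hyperplane, same sum with x0), the lower one
   only if moreover (x \<inter> y) + x0 = x + x0, and the difference of the two indicators is the
   condition rank (tau y - tau x) = 1, since the image of tau y - tau x, pulled back to x0,
   is (x + y) \<inter> x0.
   For y = x the upper covers are the covers of x inside x + x0, the lower covers are the
   hyperplanes of x not containing x \<inter> x0, and the Gaussian counts of these (hyperplanes
   are counted by double counting against lines) give (q^2 - 1) times the difference as
   D4(x) - |x|, while |x| = q^D / (D1 D2)(x) by the Grassmann formula. *)

section \<open>Counting subspaces of a finite vector space\<close>

locale finite_vector_space = vector_space sc
  for sc :: "'f::{field,finite} \<Rightarrow> 'v::ab_group_add \<Rightarrow> 'v" +
  assumes finite_UNIV_vectors: "finite (UNIV :: 'v set)"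
begin

lemma finite_vectors [simp, intro]: "finite (X :: 'v set)"
  using finite_UNIV_vectors by (rule finite_subset[OF subset_UNIV])

lemma finite_vector_sets [simp, intro]: "finite (S :: 'v set set)"
  using finite_UNIV_vectors by (metis Finite_Set.finite_set finite_subset subset_UNIV)

sublocale fd: finite_dimensional_vector_space sc "extend_basis {}"
  by unfold_locales
    (auto simp: independent_extend_basis[OF independent_empty] span_extend_basis[OF independent_empty])

lemma two_le_card_field: "2 \<le> CARD('f)"
proof -
  have "card {0::'f, 1} \<le> CARD('f)" by (rule card_mono) auto
  then show ?thesis by simp
qed

lemma card_span_independent:
  assumes "independent B"
  shows "card (span B) = CARD('f) ^ card B"
  using finite_vectors[of B] assms
proof (induction B rule: finite_induct)
  case empty
  then show ?case by simp
next
  case (insert b B)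
  have indB: "independent B" and b_notin: "b \<notin> span B"
    using insert.prems insert.hyps(2) by (auto simp: independent_insert)
  let ?f = "\<lambda>(c, u). sc c b + u"
  have "span (insert b B) = ?f ` (UNIV \<times> span B)"
  proof (intro set_eqI iffI)
    fix v assume "v \<in> span (insert b B)"
    then obtain c where "v - sc c b \<in> span B" by (auto simp: span_insert)
    then show "v \<in> ?f ` (UNIV \<times> span B)" by (force intro: image_eqI[of _ _ "(c, v - sc c b)"])
  next
    fix v assume "v \<in> ?f ` (UNIV \<times> span B)"
    then obtain c u where "u \<in> span B" "v = sc c b + u" by auto
    then show "v \<in> span (insert b B)"
      unfolding span_insert by (auto intro!: exI[of _ c])
  qed
  moreover have "inj_on ?f (UNIV \<times> span B)"
  proof (rule inj_onI, clarsimp)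
    fix c u c' u' assume u: "u \<in> span B" "u' \<in> span B" and eq: "sc c b + u = sc c' b + u'"
    have "sc (c - c') b = u' - u"
      using eq by (simp add: scale_left_diff_distrib algebra_simps)
    then have "sc (c - c') b \<in> span B"
      using u by (simp add: span_diff)
    then have "c = c'"
      using b_notin span_scale[of "sc (c - c') b" B "inverse (c - c')"] by (cases "c = c'") auto
    then show "c = c' \<and> u = u'" using eq by simp
  qed
  ultimately have "card (span (insert b B)) = CARD('f) * card (span B)"
    by (simp add: card_image card_cartesian_product)
  then show ?case
    using insert indB by simp
qed

lemma card_subspace: "subspace x \<Longrightarrow> card x = CARD('f) ^ dim x"
  by (metis basis_exists card_span_independent span_subspace)

lemma card_Diff_subspace:
  assumes "subspace x" "subspace S" "x \<subseteq> S"
  shows "real (card (S - x)) = real CARD('f) ^ dim S - real CARD('f) ^ dim x"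
proof -
  have "card x \<le> card S" using assms(3) by (rule card_mono[OF finite_vectors])
  then show ?thesis
    using card_Diff_subset[OF finite_vectors assms(3)] assms by (simp add: card_subspace of_nat_diff)
qed

lemma subspace_ssum: "subspace x \<Longrightarrow> subspace y \<Longrightarrow> subspace (ssum x y)"
  unfolding ssum_def by (rule subspace_sums)

lemma dim_ssum_Int: "subspace x \<Longrightarrow> subspace y \<Longrightarrow> dim (ssum x y) + dim (x \<inter> y) = dim x + dim y"
  unfolding ssum_def by (rule fd.dim_sums_Int)

lemma ssum_upper1: "subspace y \<Longrightarrow> x \<subseteq> ssum x y"
  unfolding ssum_def by (force dest: subspace_0)

lemma ssum_upper2: "subspace x \<Longrightarrow> y \<subseteq> ssum x y"
  unfolding ssum_def by (force dest: subspace_0)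

lemma ssum_least: "x \<subseteq> z \<Longrightarrow> y \<subseteq> z \<Longrightarrow> subspace z \<Longrightarrow> ssum x y \<subseteq> z"
  unfolding ssum_def by (auto intro: subspace_add)

lemma ssum_mono: "x \<subseteq> x' \<Longrightarrow> y \<subseteq> y' \<Longrightarrow> ssum x y \<subseteq> ssum x' y'"
  unfolding ssum_def by blast

lemma dim_strict_mono: "subspace x \<Longrightarrow> subspace y \<Longrightarrow> x \<subset> y \<Longrightarrow> dim x < dim y"
  by (metis fd.dim_subset fd.subspace_dim_equal le_neq_implies_less psubsetE)

lemma subspace_eq_zero_iff_dim: "subspace x \<Longrightarrow> x = {0} \<longleftrightarrow> dim x = 0"
  by (auto dest: subspace_0)

definition covers :: "'v set \<Rightarrow> 'v set \<Rightarrow> 'v set set" where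
  "covers x S = {z. subspace z \<and> x \<subseteq> z \<and> z \<subseteq> S \<and> dim z = dim x + 1}"

lemma dim_span_insert: "subspace x \<Longrightarrow> v \<notin> x \<Longrightarrow> dim (span (insert v x)) = dim x + 1"
  by (simp add: fd.dim_insert span_eq_iff[THEN iffD2])

lemma span_insert_in_covers:
  assumes "subspace x" "subspace S" "x \<subseteq> S" "v \<in> S - x"
  shows "span (insert v x) \<in> covers x S"
proof -
  have "span (insert v x) \<subseteq> S"
    using assms by (intro span_minimal) auto
  then show ?thesis
    using assms dim_span_insert[of x v] span_superset[of "insert v x"] by (auto simp: covers_def)
qed

lemma cover_eq_span_insert:
  assumes "subspace x" "z \<in> covers x S" "v \<in> z - x"
  shows "z = span (insert v x)"
proof -
  have z: "subspace z" "x \<subseteq> z" "dim z = dim x + 1"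
    using assms(2) by (auto simp: covers_def)
  then have "span (insert v x) \<subseteq> z"
    using assms(3) by (intro span_minimal) auto
  moreover have "dim z \<le> dim (span (insert v x))"
    using dim_span_insert[OF assms(1)] assms(3) z(3) by simp
  ultimately show ?thesis
    using fd.subspace_dim_equal[OF subspace_span z(1)] by blast
qed

lemma card_covers:
  assumes x: "subspace x" and S: "subspace S" and "x \<subseteq> S"
  shows "(real CARD('f) - 1) * real (card (covers x S)) = real CARD('f) ^ (dim S - dim x) - 1"
proof -
  let ?Q = "real CARD('f)"
  have partition: "S - x = (\<Union>z\<in>covers x S. z - x)"
  proof
    show "S - x \<subseteq> (\<Union>z\<in>covers x S. z - x)"
      using span_insert_in_covers[OF assms] by (blast intro: span_base)
  qed (auto simp: covers_def)
  have "real (card (S - x)) = (\<Sum>z\<in>covers x S. real (card (z - x)))"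
    unfolding partition
    by (subst card_UN_disjoint) (auto dest: cover_eq_span_insert[OF x])
  also have "\<dots> = real (card (covers x S)) * (?Q ^ (dim x + 1) - ?Q ^ dim x)"
    using card_Diff_subspace[OF x] by (simp add: covers_def)
  finally have "?Q ^ dim x * (?Q ^ (dim S - dim x) - 1) = ?Q ^ dim x * (real (card (covers x S)) * (?Q - 1))"
    using card_Diff_subspace[OF assms] fd.dim_subset[OF \<open>x \<subseteq> S\<close>]
    by (simp add: algebra_simps flip: power_add)
  then show ?thesis
    using two_le_card_field by (simp add: mult.commute)
qed

lemma exists_complement:
  assumes "subspace A" "subspace x" "A \<subseteq> x"
  obtains c where "subspace c" "c \<subseteq> x" "ssum A c = x" "A \<inter> c = {0}" "dim c = dim x - dim A"
proof -
  obtain B where B: "B \<subseteq> A" "independent B" "A \<subseteq> span B" "card B = dim A"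
    using basis_exists by blast
  obtain B' where B': "B \<subseteq> B'" "B' \<subseteq> x" "independent B'" "x \<subseteq> span B'"
    using maximal_independent_subset_extend[of B x] B(1,2) assms(3) by blast
  have "span B = A" "span B' = x"
    using B B' assms span_subspace by blast+
  define c where "c = span (B' - B)"
  have "subspace c" "c \<subseteq> x"
    using span_minimal[of "B' - B" x] B'(2) assms(2) by (auto simp: c_def)
  moreover have "ssum A c = x"
    using \<open>span B = A\<close> \<open>span B' = x\<close> B'(1) span_Un[of B "B' - B"]
    by (simp add: c_def ssum_def Un_absorb1 Un_Diff_cancel)
  moreover have "dim c = dim x - dim A"
    using dim_span_eq_card_independent[OF independent_mono[OF B'(3)], of "B' - B"]
      dim_span_eq_card_independent[OF B'(3)] \<open>span B' = x\<close> B(4) B'(1)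
    by (simp add: c_def card_Diff_subset)
  moreover have "A \<inter> c = {0}"
    using dim_ssum_Int[OF assms(1) \<open>subspace c\<close>] calculation fd.dim_subset[OF assms(3)]
      subspace_eq_zero_iff_dim[OF subspace_inter[OF assms(1) \<open>subspace c\<close>]] by simp
  ultimately show ?thesis using that by blast
qed

definition hyperplanes :: "'v set \<Rightarrow> 'v set set" where
  "hyperplanes x = {z. subspace z \<and> z \<subseteq> x \<and> dim z + 1 = dim x}"

lemma bij_betw_hyperplanes_complement:
  assumes A: "subspace A" and c: "subspace c" and x: "ssum A c = x" and Ac: "A \<inter> c = {0}"
  shows "bij_betw (\<lambda>z. z \<inter> c) {z \<in> hyperplanes x. A \<subseteq> z} (hyperplanes c)"
proof (rule bij_betw_byWitness[where f' = "\<lambda>w. ssum w A"])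
  have sx: "subspace x" and Ax: "A \<subseteq> x" and cx: "c \<subseteq> x"
    using x subspace_ssum[OF A c] ssum_upper1[OF c] ssum_upper2[OF A] by auto
  have dx: "dim x = dim A + dim c"
    using dim_ssum_Int[OF A c] x Ac by simp
  show "\<forall>z\<in>{z \<in> hyperplanes x. A \<subseteq> z}. ssum (z \<inter> c) A = z"
  proof (intro ballI equalityI)
    fix z assume z: "z \<in> {z \<in> hyperplanes x. A \<subseteq> z}"
    then show "ssum (z \<inter> c) A \<subseteq> z"
      by (intro ssum_least) (auto simp: hyperplanes_def)
    show "z \<subseteq> ssum (z \<inter> c) A"
    proof
      fix u assume "u \<in> z"
      moreover obtain a w where "u = a + w" "a \<in> A" "w \<in> c"
        using \<open>u \<in> z\<close> z x unfolding hyperplanes_def ssum_def by blast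
      moreover have "w \<in> z"
        using z \<open>u \<in> z\<close> \<open>a \<in> A\<close> subspace_diff[of z u a] \<open>u = a + w\<close>
        by (auto simp: hyperplanes_def)
      moreover have "u = w + a" using \<open>u = a + w\<close> by (simp add: add.commute)
      ultimately show "u \<in> ssum (z \<inter> c) A"
        unfolding ssum_def by blast
    qed
  qed
  show "\<forall>w\<in>hyperplanes c. ssum w A \<inter> c = w"
  proof (intro ballI equalityI)
    fix w assume w: "w \<in> hyperplanes c"
    show "ssum w A \<inter> c \<subseteq> w"
    proof
      fix u assume u: "u \<in> ssum w A \<inter> c"
      then obtain w' a where "u = w' + a" "w' \<in> w" "a \<in> A" unfolding ssum_def by auto
      moreover have "a \<in> c"
        using u w c \<open>u = w' + a\<close> \<open>w' \<in> w\<close> subspace_diff[of c u w'] by (auto simp: hyperplanes_def)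
      ultimately have "a = 0" using Ac by blast
      then show "u \<in> w" using \<open>u = w' + a\<close> \<open>w' \<in> w\<close> by simp
    qed
    show "w \<subseteq> ssum w A \<inter> c"
      using w ssum_upper1[OF A] by (auto simp: hyperplanes_def)
  qed
  show "(\<lambda>z. z \<inter> c) ` {z \<in> hyperplanes x. A \<subseteq> z} \<subseteq> hyperplanes c"
  proof clarify
    fix z assume z: "z \<in> hyperplanes x" "A \<subseteq> z"
    have sz: "subspace z" "z \<subseteq> x" "dim z + 1 = dim x" using z(1) by (auto simp: hyperplanes_def)
    have "ssum z c = x"
      using ssum_least[OF sz(2) cx sx] ssum_mono[OF z(2) order_refl, of c] x by blast
    then show "z \<inter> c \<in> hyperplanes c"
      using dim_ssum_Int[OF sz(1) c] sz subspace_inter[OF sz(1) c] by (auto simp: hyperplanes_def)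
  qed
  show "(\<lambda>w. ssum w A) ` hyperplanes c \<subseteq> {z \<in> hyperplanes x. A \<subseteq> z}"
  proof (rule image_subsetI)
    fix w assume w: "w \<in> hyperplanes c"
    have sw: "subspace w" "w \<subseteq> c" "dim w + 1 = dim c" using w by (auto simp: hyperplanes_def)
    have "dim (w \<inter> A) = 0"
      using Ac sw(2) by auto
    then have "dim (ssum w A) + 1 = dim x"
      using dim_ssum_Int[OF sw(1) A] sw(3) dx \<open>dim (w \<inter> A) = 0\<close> by linarith
    then show "ssum w A \<in> {z \<in> hyperplanes x. A \<subseteq> z}"
      using subspace_ssum[OF sw(1) A] ssum_least[of w x A] sw(2) cx Ax sx ssum_upper2[OF sw(1)]
      by (auto simp: hyperplanes_def)
  qed
qed

lemma card_hyperplanes_containing_eq: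
  assumes "subspace A" "subspace x" "A \<subseteq> x"
  obtains c where "subspace c" "dim c = dim x - dim A"
    and "card {z \<in> hyperplanes x. A \<subseteq> z} = card (hyperplanes c)"
  using exists_complement[OF assms] bij_betw_same_card[OF bij_betw_hyperplanes_complement[OF assms(1)]]
  by metis

lemma card_lines: "subspace x \<Longrightarrow> (real CARD('f) - 1) * real (card (covers {0} x)) = real CARD('f) ^ dim x - 1"
  using card_covers[OF subspace_single_0] by (simp add: subspace_0)

lemma card_hyperplanes_eq_card_lines:
  "subspace x \<Longrightarrow> card (hyperplanes x) = card (covers {0} x)"
proof (induction "dim x" arbitrary: x rule: less_induct)
  case (less x)
  let ?Q = "real CARD('f)"
  consider "dim x = 0" | "dim x = 1" | "dim x \<ge> 2" by linarith
  then show ?case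
  proof cases
    case 1
    have "hyperplanes x = {}"
      using 1 by (auto simp del: fd.dim_eq_0 simp: hyperplanes_def)
    moreover have "covers {0} x = {}"
    proof (rule equals0I)
      fix l assume "l \<in> covers {0} x"
      then show False
        using fd.dim_subset[of l x] 1 by (simp del: fd.dim_eq_0 add: covers_def)
    qed
    ultimately show ?thesis by simp
  next
    case 2
    have "hyperplanes x = {{0}}"
      using 2 less.prems subspace_0 subspace_single_0 by (auto simp: hyperplanes_def)
    moreover have "covers {0} x = {x}"
    proof (intro set_eqI iffI)
      fix l assume "l \<in> covers {0} x"
      then show "l \<in> {x}"
        using 2 less.prems fd.subspace_dim_equal[of l x] by (simp add: covers_def)
    next
      fix l assume "l \<in> {x}"
      then show "l \<in> covers {0} x"
        using 2 less.prems subspace_0[OF less.prems] by (simp add: covers_def)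
    qed
    ultimately show ?thesis by simp
  next
    case 3
    define K where "K = (?Q ^ (dim x - 1) - 1) / (?Q - 1)"
    have Q1: "?Q - 1 > 0" using two_le_card_field by simp
    have "1 < ?Q ^ (dim x - 1)"
      using 3 two_le_card_field by (intro one_less_power) auto
    then have "K > 0" unfolding K_def using Q1 by simp
    have lines_in_hyperplane: "real (card {l \<in> covers {0} x. l \<subseteq> z}) = K" if "z \<in> hyperplanes x" for z
    proof -
      have z: "subspace z" "z \<subseteq> x" "dim z = dim x - 1" using that by (auto simp: hyperplanes_def)
      then have "{l \<in> covers {0} x. l \<subseteq> z} = covers {0} z" by (auto simp: covers_def)
      then show ?thesis
        using card_lines[OF z(1)] Q1 z(3) by (simp add: K_def field_simps)
    qed
    have hyperplanes_through_line: "real (card {z \<in> hyperplanes x. l \<subseteq> z}) = K" if "l \<in> covers {0} x" for l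
    proof -
      have l: "subspace l" "l \<subseteq> x" "dim l = 1" using that by (auto simp: covers_def)
      obtain c where c: "subspace c" "dim c = dim x - 1"
        and "card {z \<in> hyperplanes x. l \<subseteq> z} = card (hyperplanes c)"
        using card_hyperplanes_containing_eq[OF l(1) less.prems l(2)] l(3) by metis
      moreover have "card (hyperplanes c) = card (covers {0} c)"
        using less.hyps[OF _ c(1)] c(2) 3 by simp
      ultimately show ?thesis
        using card_lines[OF c(1)] Q1 by (simp add: K_def field_simps)
    qed
    have "(\<Sum>z\<in>hyperplanes x. K) = (\<Sum>z\<in>hyperplanes x. real (card {l \<in> covers {0} x. l \<subseteq> z}))"
      by (intro sum.cong refl lines_in_hyperplane[symmetric])
    also have "\<dots> = (\<Sum>l\<in>covers {0} x. real (card {z \<in> hyperplanes x. l \<subseteq> z}))"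
      unfolding of_nat_sum[symmetric]
      by (rule arg_cong, rule sum_multicount_gen[OF finite_vector_sets finite_vector_sets]) (rule ballI, rule refl)
    also have "\<dots> = (\<Sum>l\<in>covers {0} x. K)"
      by (intro sum.cong refl hyperplanes_through_line)
    finally have "real (card (hyperplanes x)) * K = real (card (covers {0} x)) * K"
      by simp
    then show ?thesis using \<open>K > 0\<close> by simp
  qed
qed

lemma card_hyperplanes_containing:
  assumes "subspace A" "subspace x" "A \<subseteq> x"
  shows "(real CARD('f) - 1) * real (card {z \<in> hyperplanes x. A \<subseteq> z}) = real CARD('f) ^ (dim x - dim A) - 1"
proof -
  obtain c where "subspace c" "dim c = dim x - dim A" "card {z \<in> hyperplanes x. A \<subseteq> z} = card (hyperplanes c)"
    using card_hyperplanes_containing_eq[OF assms] by metis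
  then show ?thesis
    using card_hyperplanes_eq_card_lines card_lines by simp
qed

lemma card_hyperplanes:
  "subspace x \<Longrightarrow> (real CARD('f) - 1) * real (card (hyperplanes x)) = real CARD('f) ^ dim x - 1"
proof -
  assume x: "subspace x"
  have "{z \<in> hyperplanes x. {0} \<subseteq> z} = hyperplanes x"
    by (auto simp: hyperplanes_def subspace_0)
  then show ?thesis
    using card_hyperplanes_containing[OF subspace_single_0 x] x subspace_0 by simp
qed

definition diag_op :: "('v set \<Rightarrow> complex) \<Rightarrow> 'v op" where
  "diag_op m = (\<lambda>y x. if y = x \<and> x \<in> subspaces sc then m x else 0)"

lemma ocomp_indicators:
  "ocomp sc (\<lambda>y z. if P y z then 1 else 0) (\<lambda>z x. if R z x then 1 else 0) y x
   = of_nat (card {z \<in> subspaces sc. P y z \<and> R z x})"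
proof -
  have "ocomp sc (\<lambda>y z. if P y z then 1 else 0) (\<lambda>z x. if R z x then 1 else 0) y x
      = (\<Sum>z\<in>subspaces sc. if P y z \<and> R z x then 1 else 0)"
    unfolding ocomp_def by (intro sum.cong) auto
  then show ?thesis
    by (simp add: sum.inter_filter[OF finite_vector_sets, symmetric])
qed

lemma ocomp_diag_op_right: "x \<in> subspaces sc \<Longrightarrow> ocomp sc N (diag_op m) y x = N y x * m x"
  unfolding ocomp_def diag_op_def by (simp add: if_distrib[where f = "\<lambda>t. _ * t"] cong: if_cong)

lemma oinv_diag_op:
  assumes "\<forall>x\<in>subspaces sc. m x \<noteq> 0"
  shows "oinv sc (diag_op m) = diag_op (\<lambda>x. 1 / m x)"
  unfolding oinv_def
proof (rule the_equality)
  show "(\<forall>y x. (y \<notin> subspaces sc \<or> x \<notin> subspaces sc) \<longrightarrow> diag_op (\<lambda>x. 1 / m x) y x = 0) \<and>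
      (\<forall>y\<in>subspaces sc. \<forall>x\<in>subspaces sc.
        ocomp sc (diag_op (\<lambda>x. 1 / m x)) (diag_op m) y x = oid y x \<and>
        ocomp sc (diag_op m) (diag_op (\<lambda>x. 1 / m x)) y x = oid y x)"
    using assms by (auto simp: ocomp_diag_op_right oid_def) (auto simp: diag_op_def)
next
  fix N assume N: "(\<forall>y x. (y \<notin> subspaces sc \<or> x \<notin> subspaces sc) \<longrightarrow> N y x = 0) \<and>
      (\<forall>y\<in>subspaces sc. \<forall>x\<in>subspaces sc.
        ocomp sc N (diag_op m) y x = oid y x \<and> ocomp sc (diag_op m) N y x = oid y x)"
  show "N = diag_op (\<lambda>x. 1 / m x)"
  proof (intro ext)
    fix y x
    show "N y x = diag_op (\<lambda>x. 1 / m x) y x"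
    proof (cases "y \<in> subspaces sc \<and> x \<in> subspaces sc")
      case True
      then have "N y x * m x = oid y x"
        using N ocomp_diag_op_right[of x N m y] by auto
      then show ?thesis
        using True assms by (cases "y = x") (auto simp: oid_def diag_op_def field_simps)
    qed (use N in \<open>auto simp: diag_op_def\<close>)
  qed
qed

end

section \<open>Covers preserving the sum with a fixed subspace\<close>

locale finite_vector_space_with_subspace = finite_vector_space sc
  for sc :: "'f::{field,finite} \<Rightarrow> 'v::ab_group_add \<Rightarrow> 'v" +
  fixes x0 :: "'v set"
  assumes subspace_x0: "subspace x0"
begin

definition upper_covers :: "'v set \<Rightarrow> 'v set set" where
  "upper_covers x = {z. covby sc x z \<and> ssum z x0 = ssum x x0}"

definition lower_covers :: "'v set \<Rightarrow> 'v set set" where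
  "lower_covers x = {z. covby sc z x \<and> ssum z x0 = ssum x x0}"

definition adjacent :: "'v set \<Rightarrow> 'v set \<Rightarrow> bool" where
  "adjacent x y \<longleftrightarrow> dim y = dim x \<and> dim (x \<inter> y) + 1 = dim x \<and> ssum y x0 = ssum x x0"

lemma covby_iff: "covby sc a b \<longleftrightarrow> subspace a \<and> subspace b \<and> a \<subseteq> b \<and> dim a + 1 = dim b"
  by (simp add: covby_def subspaces_def)

lemma ocomp_opL2_opR2:
  "ocomp sc (opL2 sc x0) (opR2 sc x0) y x = of_nat (card (upper_covers y \<inter> upper_covers x))"
proof -
  have "{z \<in> subspaces sc. (covby sc y z \<and> ssum y x0 = ssum z x0) \<and> (covby sc x z \<and> ssum z x0 = ssum x x0)}
      = upper_covers y \<inter> upper_covers x"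
    by (auto simp: upper_covers_def covby_def)
  then show ?thesis
    unfolding opL2_def opR2_def ocomp_indicators by simp
qed

lemma ocomp_opR2_opL2:
  "ocomp sc (opR2 sc x0) (opL2 sc x0) y x = of_nat (card (lower_covers y \<inter> lower_covers x))"
proof -
  have "{z \<in> subspaces sc. (covby sc z y \<and> ssum y x0 = ssum z x0) \<and> (covby sc z x \<and> ssum z x0 = ssum x x0)}
      = lower_covers y \<inter> lower_covers x"
    by (auto simp: lower_covers_def covby_def)
  then show ?thesis
    unfolding opL2_def opR2_def ocomp_indicators by simp
qed

lemma ssum_ssum_x0:
  assumes "subspace x" "subspace y" "ssum y x0 = ssum x x0"
  shows "ssum (ssum x y) x0 = ssum x x0"
proof (rule antisym)
  have "y \<subseteq> ssum x x0"
    using ssum_upper1[OF subspace_x0, of y] assms(3) by simp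
  then show "ssum (ssum x y) x0 \<subseteq> ssum x x0"
    using assms(1) subspace_x0 ssum_upper1 ssum_upper2
    by (intro ssum_least subspace_ssum) auto
  show "ssum x x0 \<subseteq> ssum (ssum x y) x0"
    by (rule ssum_mono[OF ssum_upper1[OF assms(2)] order_refl])
qed

lemma upper_covers_eq_covers: "subspace x \<Longrightarrow> upper_covers x = covers x (ssum x x0)"
proof (intro set_eqI iffI)
  fix z assume x: "subspace x" and "z \<in> upper_covers x"
  then show "z \<in> covers x (ssum x x0)"
    using ssum_upper1[OF subspace_x0, of z] by (auto simp: upper_covers_def covers_def covby_iff)
next
  fix z assume x: "subspace x" and z: "z \<in> covers x (ssum x x0)"
  then have "ssum z x0 = ssum x x0"
    using ssum_least[of z "ssum x x0" x0] ssum_mono[of x z x0 x0] ssum_upper2[OF x, of x0]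
      subspace_ssum[OF x subspace_x0] by (auto simp: covers_def)
  then show "z \<in> upper_covers x"
    using x z by (auto simp: upper_covers_def covers_def covby_iff)
qed

lemma hyperplane_ssum_eq_iff:
  assumes x: "subspace x" and z: "z \<in> hyperplanes x"
  shows "ssum z x0 = ssum x x0 \<longleftrightarrow> \<not> x \<inter> x0 \<subseteq> z"
proof -
  have sz: "subspace z" "z \<subseteq> x" "dim z + 1 = dim x"
    using z by (auto simp: hyperplanes_def)
  have dims: "dim (ssum x x0) + dim (x \<inter> x0) = dim (ssum z x0) + dim (z \<inter> x0) + 1"
    using dim_ssum_Int[OF x subspace_x0] dim_ssum_Int[OF sz(1) subspace_x0] sz(3) by simp
  have "ssum z x0 \<subseteq> ssum x x0" "z \<inter> x0 \<subseteq> x \<inter> x0"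
    using ssum_mono[OF sz(2) order_refl] sz(2) by auto
  then have "ssum z x0 = ssum x x0 \<longleftrightarrow> dim (ssum x x0) \<le> dim (ssum z x0)"
    "z \<inter> x0 = x \<inter> x0 \<longleftrightarrow> dim (x \<inter> x0) \<le> dim (z \<inter> x0)"
    using fd.subspace_dim_equal subspace_ssum subspace_inter sz(1) x subspace_x0
    by (metis fd.dim_subset order_refl)+
  moreover have "x \<inter> x0 \<subseteq> z \<longleftrightarrow> z \<inter> x0 = x \<inter> x0"
    using sz(2) by blast
  ultimately show ?thesis
    using dims fd.dim_subset[OF \<open>ssum z x0 \<subseteq> ssum x x0\<close>] fd.dim_subset[OF \<open>z \<inter> x0 \<subseteq> x \<inter> x0\<close>]
    by linarith
qed

lemma lower_covers_eq_hyperplanes: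
  "subspace x \<Longrightarrow> lower_covers x = hyperplanes x - {z \<in> hyperplanes x. x \<inter> x0 \<subseteq> z}"
  using hyperplane_ssum_eq_iff
  by (auto simp: lower_covers_def hyperplanes_def covby_iff)

lemma upper_covers_Int:
  assumes x: "subspace x" and y: "subspace y" and "y \<noteq> x"
  shows "upper_covers y \<inter> upper_covers x = (if adjacent x y then {ssum x y} else {})"
proof -
  have grass: "dim (ssum x y) + dim (x \<inter> y) = dim x + dim y"
    by (rule dim_ssum_Int[OF x y])
  have "z = ssum x y \<and> adjacent x y" if z: "z \<in> upper_covers y \<inter> upper_covers x" for z
  proof -
    have zz: "subspace z" "x \<subseteq> z" "y \<subseteq> z" "dim x + 1 = dim z" "dim y + 1 = dim z"
      "ssum y x0 = ssum x x0"
      using z by (auto simp: upper_covers_def covby_iff)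
    have xy_le: "ssum x y \<subseteq> z"
      by (rule ssum_least[OF zz(2,3,1)])
    have "\<not> y \<subseteq> x"
      using fd.subspace_dim_equal[OF y x] zz(4,5) \<open>y \<noteq> x\<close> by auto
    then have "x \<subset> ssum x y"
      using ssum_upper1[OF y, of x] ssum_upper2[OF x, of y] by auto
    then have "dim z \<le> dim (ssum x y)"
      using dim_strict_mono[OF x subspace_ssum[OF x y]] zz(4) by simp
    then have "z = ssum x y"
      using fd.subspace_dim_equal[OF subspace_ssum[OF x y] zz(1) xy_le] by simp
    then show ?thesis
      using grass zz \<open>dim z \<le> dim (ssum x y)\<close> by (auto simp: adjacent_def)
  qed
  moreover have "ssum x y \<in> upper_covers y \<inter> upper_covers x" if "adjacent x y"
  proof -
    have "dim y = dim x" "dim (x \<inter> y) + 1 = dim x" "ssum y x0 = ssum x x0"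
      using that by (auto simp: adjacent_def)
    then show ?thesis
      using grass x y subspace_ssum[OF x y] ssum_upper1[OF y, of x] ssum_upper2[OF x, of y]
        ssum_ssum_x0[OF x y]
      by (auto simp: upper_covers_def covby_iff)
  qed
  ultimately show ?thesis by auto
qed

lemma lower_covers_Int:
  assumes x: "subspace x" and y: "subspace y" and "y \<noteq> x"
  shows "lower_covers y \<inter> lower_covers x
    = (if adjacent x y \<and> ssum (x \<inter> y) x0 = ssum x x0 then {x \<inter> y} else {})"
proof -
  have xy: "subspace (x \<inter> y)" by (rule subspace_inter[OF x y])
  have "z = x \<inter> y \<and> adjacent x y \<and> ssum (x \<inter> y) x0 = ssum x x0"
    if z: "z \<in> lower_covers y \<inter> lower_covers x" for z
  proof -
    have zz: "subspace z" "z \<subseteq> x" "z \<subseteq> y" "dim z + 1 = dim x" "dim z + 1 = dim y"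
      "ssum z x0 = ssum x x0" "ssum z x0 = ssum y x0"
      using z by (auto simp: lower_covers_def covby_iff)
    have "\<not> x \<subseteq> y"
      using fd.subspace_dim_equal[OF x y] zz(4,5) \<open>y \<noteq> x\<close> by auto
    then have "x \<inter> y \<subset> x" by blast
    then have "dim (x \<inter> y) \<le> dim z"
      using dim_strict_mono[OF xy x] zz(4) by simp
    then have "z = x \<inter> y"
      using fd.subspace_dim_equal[OF zz(1) xy] zz(2,3) by simp
    then show ?thesis
      using zz by (auto simp: adjacent_def)
  qed
  moreover have "x \<inter> y \<in> lower_covers y \<inter> lower_covers x"
    if "adjacent x y" "ssum (x \<inter> y) x0 = ssum x x0"
    using that x y xy by (auto simp: adjacent_def lower_covers_def covby_iff)
  ultimately show ?thesis by auto
qed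

lemma card_upper_minus_lower_covers:
  assumes x: "subspace x"
  shows "(real CARD('f) - 1) * (real (card (upper_covers x)) - real (card (lower_covers x)))
    = real CARD('f) ^ (dim x - dim (x \<inter> x0)) + real CARD('f) ^ (dim x0 - dim (x \<inter> x0)) - 1
      - real CARD('f) ^ dim x"
proof -
  let ?Q = "real CARD('f)"
  have x_x0: "subspace (x \<inter> x0)" by (rule subspace_inter[OF x subspace_x0])
  have "dim (ssum x x0) - dim x = dim x0 - dim (x \<inter> x0)"
    using dim_ssum_Int[OF x subspace_x0] by linarith
  then have upper: "(?Q - 1) * real (card (upper_covers x)) = ?Q ^ (dim x0 - dim (x \<inter> x0)) - 1"
    using card_covers[OF x subspace_ssum[OF x subspace_x0] ssum_upper1[OF subspace_x0]]
    by (simp add: upper_covers_eq_covers[OF x])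
  have lower_eq: "real (card (lower_covers x))
      = real (card (hyperplanes x)) - real (card {z \<in> hyperplanes x. x \<inter> x0 \<subseteq> z})"
    by (simp add: lower_covers_eq_hyperplanes[OF x] card_Diff_subset card_mono of_nat_diff)
  have lower: "(?Q - 1) * real (card (lower_covers x)) = ?Q ^ dim x - ?Q ^ (dim x - dim (x \<inter> x0))"
    unfolding lower_eq right_diff_distrib card_hyperplanes[OF x]
    using card_hyperplanes_containing[OF x_x0 x] by simp
  show ?thesis
    using upper lower by (simp add: algebra_simps)
qed

end

section \<open>The map tau of a direct sum decomposition\<close>

context vector_space
begin

lemma coset_eq_iff: "subspace W \<Longrightarrow> coset W u = coset W v \<longleftrightarrow> u - v \<in> W"
proof
  assume W: "subspace W" and eq: "coset W u = coset W v"
  have "u \<in> coset W u"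
    unfolding coset_def using subspace_0[OF W] by force
  then have "u \<in> coset W v" using eq by simp
  then obtain w where "u = v + w" "w \<in> W"
    unfolding coset_def by blast
  then show "u - v \<in> W" by simp
next
  assume W: "subspace W" and uv: "u - v \<in> W"
  have "u + w = v + ((u - v) + w)" "v + w = u + (w - (u - v))" for w
    by simp_all
  then show "coset W u = coset W v"
    unfolding coset_def using uv W subspace_add subspace_diff by blast
qed

lemma pointwise_diff_cosets:
  assumes W: "subspace W"
  shows "{a - b |a b. a \<in> coset W u \<and> b \<in> coset W v} = coset W (u - v)"
proof (intro set_eqI iffI)
  fix t assume "t \<in> {a - b |a b. a \<in> coset W u \<and> b \<in> coset W v}"
  then obtain w w' where "t = (u + w) - (v + w')" "w \<in> W" "w' \<in> W"
    unfolding coset_def by blast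
  moreover have "(u + w) - (v + w') = (u - v) + (w - w')" by simp
  ultimately show "t \<in> coset W (u - v)"
    unfolding coset_def using W subspace_diff by blast
next
  fix t assume "t \<in> coset W (u - v)"
  then obtain w where "t = (u + w) - (v + 0)" "w \<in> W"
    unfolding coset_def by auto
  then show "t \<in> {a - b |a b. a \<in> coset W u \<and> b \<in> coset W v}"
    unfolding coset_def using subspace_0[OF W] by blast
qed

end

locale finite_vector_space_direct_sum = finite_vector_space_with_subspace sc x0
  for sc :: "'f::{field,finite} \<Rightarrow> 'v::ab_group_add \<Rightarrow> 'v" and x0 +
  fixes x1 :: "'v set"
  assumes subspace_x1: "subspace x1"
    and ssum_x0_x1: "ssum x0 x1 = UNIV"
    and x0_Int_x1: "x0 \<inter> x1 = {0}"
begin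

lemma proj0_unique:
  assumes "a \<in> x0" "u - a \<in> x1"
  shows "proj0 x0 x1 u = a"
  unfolding proj0_def
proof (rule the_equality)
  show "a \<in> x0 \<and> u - a \<in> x1" using assms ..
  fix a' assume a': "a' \<in> x0 \<and> u - a' \<in> x1"
  then have "a' - a \<in> x0 \<inter> x1"
    using assms subspace_diff[OF subspace_x0, of a' a] subspace_diff[OF subspace_x1, of "u - a" "u - a'"]
    by simp
  then show "a' = a" using x0_Int_x1 by simp
qed

lemma proj0_mem: "proj0 x0 x1 u \<in> x0" "u - proj0 x0 x1 u \<in> x1"
proof -
  obtain a b where "u = a + b" "a \<in> x0" "b \<in> x1"
    using ssum_x0_x1 unfolding ssum_def by blast
  then have "proj0 x0 x1 u = a"
    by (intro proj0_unique) auto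
  then show "proj0 x0 x1 u \<in> x0" "u - proj0 x0 x1 u \<in> x1"
    using \<open>u = a + b\<close> \<open>a \<in> x0\<close> \<open>b \<in> x1\<close> by auto
qed

lemma proj0_diff: "u - v \<in> x0 \<Longrightarrow> proj0 x0 x1 u - proj0 x0 x1 v = u - v"
proof -
  assume "u - v \<in> x0"
  have "(u - v) - (proj0 x0 x1 u - proj0 x0 x1 v) = (u - proj0 x0 x1 u) - (v - proj0 x0 x1 v)"
    by simp
  moreover have "(u - proj0 x0 x1 u) - (v - proj0 x0 x1 v) \<in> x1"
    using proj0_mem(2) subspace_diff[OF subspace_x1] by metis
  moreover have "(u - v) - (proj0 x0 x1 u - proj0 x0 x1 v) \<in> x0"
    using \<open>u - v \<in> x0\<close> proj0_mem(1) subspace_diff[OF subspace_x0] by metis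
  ultimately have "(u - v) - (proj0 x0 x1 u - proj0 x0 x1 v) \<in> x0 \<inter> x1"
    by (metis IntI)
  then show ?thesis using x0_Int_x1 by simp
qed

text \<open>The value of tau does not depend on the representative chosen by SOME.\<close>

lemma tau_coset:
  assumes x: "subspace x" and "u \<in> x" "u - w \<in> x0"
  shows "tau x0 x1 x (coset x0 w) = coset (x \<inter> x0) (proj0 x0 x1 u)"
proof -
  define u' where "u' = (SOME u. u \<in> x \<and> coset x0 u = coset x0 w)"
  have "u \<in> x \<and> coset x0 u = coset x0 w"
    using assms coset_eq_iff[OF subspace_x0] by blast
  then have u': "u' \<in> x" "coset x0 u' = coset x0 w"
    unfolding u'_def by (metis (mono_tags, lifting) someI)+
  then have "u' - u \<in> x0"
    using assms coset_eq_iff[OF subspace_x0] subspace_diff[OF subspace_x0, of "u' - w" "u - w"] by simp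
  moreover have "u' - u \<in> x"
    using u'(1) \<open>u \<in> x\<close> subspace_diff[OF x] by blast
  ultimately have "coset (x \<inter> x0) (proj0 x0 x1 u') = coset (x \<inter> x0) (proj0 x0 x1 u)"
    using coset_eq_iff[OF subspace_inter[OF x subspace_x0]] proj0_diff by simp
  then show ?thesis
    unfolding tau_def u'_def[symmetric] by simp
qed

lemma tau_diff_coset:
  assumes x: "subspace x" and y: "subspace y" and Int_eq: "y \<inter> x0 = x \<inter> x0"
    and "u \<in> x" "u - w \<in> x0" "v \<in> y" "v - w \<in> x0"
  shows "tau_diff x0 x1 y x (coset x0 w) = coset (x \<inter> x0) (v - u)"
proof -
  have "v - u \<in> x0"
    using assms subspace_diff[OF subspace_x0, of "v - w" "u - w"] by simp
  then show ?thesis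
    unfolding tau_diff_def tau_coset[OF x \<open>u \<in> x\<close> \<open>u - w \<in> x0\<close>]
      tau_coset[OF y \<open>v \<in> y\<close> \<open>v - w \<in> x0\<close>] Int_eq
    by (simp add: pointwise_diff_cosets subspace_inter[OF x subspace_x0] proj0_diff)
qed

lemma Union_tau_diff:
  assumes x: "subspace x" and y: "subspace y"
    and sum_eq: "ssum y x0 = ssum x x0" and Int_eq: "y \<inter> x0 = x \<inter> x0"
  shows "(\<Union>C\<in>qdom x0 x. tau_diff x0 x1 y x C) = ssum x y \<inter> x0"
proof (intro equalityI subsetI)
  fix t assume "t \<in> (\<Union>C\<in>qdom x0 x. tau_diff x0 x1 y x C)"
  then obtain w where w: "w \<in> x" "t \<in> tau_diff x0 x1 y x (coset x0 w)"
    unfolding qdom_def by blast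
  have "w \<in> ssum y x0"
    using w(1) ssum_upper1[OF subspace_x0, of x] sum_eq by blast
  then obtain v where v: "v \<in> y" "v - w \<in> x0"
    unfolding ssum_def by (force simp: subspace_neg[OF subspace_x0])
  then obtain a where a: "a \<in> x \<inter> x0" "t = (v - w) + a"
    using w tau_diff_coset[OF x y Int_eq w(1) _ v] subspace_0[OF subspace_x0]
    by (auto simp: coset_def)
  have "t \<in> x0"
    using a v(2) subspace_add[OF subspace_x0] by auto
  moreover have "t = (- w) + (v + a)" "v + a \<in> y" "- w \<in> x"
    using a v(1) Int_eq subspace_add[OF y] subspace_neg[OF x] w(1) by auto
  ultimately show "t \<in> ssum x y \<inter> x0"
    unfolding ssum_def by blast
next
  fix t assume "t \<in> ssum x y \<inter> x0"
  then obtain a b where ab: "t = a + b" "a \<in> x" "b \<in> y" "t \<in> x0"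
    unfolding ssum_def by blast
  have "-a \<in> x" using ab(2) subspace_neg[OF x] by blast
  have "tau_diff x0 x1 y x (coset x0 (- a)) = coset (x \<inter> x0) t"
    using tau_diff_coset[OF x y Int_eq \<open>-a \<in> x\<close> _ ab(3)] ab subspace_0[OF subspace_x0]
    by (simp add: algebra_simps)
  moreover have "t \<in> coset (x \<inter> x0) t"
    unfolding coset_def using subspace_0[OF subspace_inter[OF x subspace_x0]] by force
  ultimately show "t \<in> (\<Union>C\<in>qdom x0 x. tau_diff x0 x1 y x C)"
    unfolding qdom_def using \<open>-a \<in> x\<close> by blast
qed

lemma tau_rank_eq:
  assumes "subspace x" "subspace y" "ssum y x0 = ssum x x0" "y \<inter> x0 = x \<inter> x0"
  shows "tau_rank sc x0 x1 y x = dim (ssum x y \<inter> x0) - dim (x \<inter> x0)"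
  unfolding tau_rank_def Union_tau_diff[OF assms] ..

lemma adjacent_iff_tau_rank:
  assumes x: "subspace x" and y: "subspace y"
  shows "adjacent x y \<and> ssum (x \<inter> y) x0 \<noteq> ssum x x0 \<longleftrightarrow>
    ssum y x0 = ssum x x0 \<and> y \<inter> x0 = x \<inter> x0 \<and> tau_rank sc x0 x1 y x = 1"
proof -
  define w where "w = x \<inter> y"
  have w: "subspace w" and xy: "subspace (ssum x y)"
    using x y by (simp_all add: w_def subspace_inter subspace_ssum)
  have x_x0: "subspace (x \<inter> x0)" and w_x0: "subspace (w \<inter> x0)"
    using x w subspace_x0 by (simp_all add: subspace_inter)
  have grass_x: "dim (ssum x x0) + dim (x \<inter> x0) = dim x + dim x0"
    and grass_y: "dim (ssum y x0) + dim (y \<inter> x0) = dim y + dim x0"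
    and grass_w: "dim (ssum w x0) + dim (w \<inter> x0) = dim w + dim x0"
    and grass_xy: "dim (ssum x y) + dim w = dim x + dim y"
    and grass_xy_x0: "dim (ssum (ssum x y) x0) + dim (ssum x y \<inter> x0) = dim (ssum x y) + dim x0"
    using dim_ssum_Int x y w xy subspace_x0 unfolding w_def by blast+
  have w_x: "ssum w x0 \<subseteq> ssum x x0" "w \<inter> x0 \<subseteq> x \<inter> x0"
    using ssum_mono[of w x x0 x0] by (auto simp: w_def)
  show ?thesis
  proof
    assume adj: "adjacent x y \<and> ssum (x \<inter> y) x0 \<noteq> ssum x x0"
    then have sum_eq: "ssum y x0 = ssum x x0" and "dim y = dim x" "dim w + 1 = dim x"
      and "ssum w x0 \<noteq> ssum x x0"
      by (auto simp: adjacent_def w_def)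
    then have "dim (ssum w x0) < dim (ssum x x0)"
      using dim_strict_mono[OF subspace_ssum[OF w subspace_x0] subspace_ssum[OF x subspace_x0]] w_x(1)
      by blast
    then have "dim (x \<inter> x0) \<le> dim (w \<inter> x0)"
      using grass_x grass_w \<open>dim w + 1 = dim x\<close> by linarith
    then have Int_eq_x: "w \<inter> x0 = x \<inter> x0"
      using fd.subspace_dim_equal[OF w_x0 x_x0 w_x(2)] by blast
    have "dim (y \<inter> x0) \<le> dim (w \<inter> x0)"
      using grass_x grass_y sum_eq Int_eq_x \<open>dim y = dim x\<close> by simp
    then have "w \<inter> x0 = y \<inter> x0"
      using fd.subspace_dim_equal[OF w_x0 subspace_inter[OF y subspace_x0]] by (auto simp: w_def)
    then have Int_eq: "y \<inter> x0 = x \<inter> x0"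
      using Int_eq_x by simp
    have "dim (ssum x y \<inter> x0) = dim (x \<inter> x0) + 1"
      using grass_x grass_xy grass_xy_x0 \<open>dim y = dim x\<close> \<open>dim w + 1 = dim x\<close>
      unfolding ssum_ssum_x0[OF x y sum_eq] by linarith
    then show "ssum y x0 = ssum x x0 \<and> y \<inter> x0 = x \<inter> x0 \<and> tau_rank sc x0 x1 y x = 1"
      using sum_eq Int_eq tau_rank_eq[OF x y sum_eq Int_eq] by simp
  next
    assume "ssum y x0 = ssum x x0 \<and> y \<inter> x0 = x \<inter> x0 \<and> tau_rank sc x0 x1 y x = 1"
    then have sum_eq: "ssum y x0 = ssum x x0" and Int_eq: "y \<inter> x0 = x \<inter> x0"
      and rank: "dim (ssum x y \<inter> x0) = dim (x \<inter> x0) + 1"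
      using tau_rank_eq[OF x y] by auto
    have "dim y = dim x"
      using grass_x grass_y sum_eq Int_eq by simp
    moreover have "dim w + 1 = dim x"
      using grass_x grass_xy grass_xy_x0 rank \<open>dim y = dim x\<close>
      unfolding ssum_ssum_x0[OF x y sum_eq] by linarith
    moreover have "w \<inter> x0 = x \<inter> x0"
      using Int_eq by (auto simp: w_def)
    then have "ssum w x0 \<noteq> ssum x x0"
      using grass_x grass_w \<open>dim w + 1 = dim x\<close> by auto
    ultimately show "adjacent x y \<and> ssum (x \<inter> y) x0 \<noteq> ssum x x0"
      using sum_eq by (simp add: adjacent_def w_def)
  qed
qed

lemma opD3_eq:
  assumes "x \<in> subspaces sc" "y \<in> subspaces sc"
  shows "opD3 sc x0 x1 y x = (if adjacent x y \<and> ssum (x \<inter> y) x0 \<noteq> ssum x x0 then 1 else 0)"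
  using assms adjacent_iff_tau_rank by (simp add: opD3_def subspaces_def)

lemma opD4_diag:
  assumes "x \<in> subspaces sc"
  shows "opD4 sc x0 x x = of_real (real CARD('f) ^ (dim x - dim (x \<inter> x0))
    + real CARD('f) ^ (dim x0 - dim (x \<inter> x0)) - 1)"
proof -
  let ?Q = "complex_of_nat CARD('f)"
  have x: "subspace x" using assms by (simp add: subspaces_def)
  have "?Q ^ dim x = ?Q ^ (dim x - dim (x \<inter> x0)) * ?Q ^ dim (x \<inter> x0)"
    "?Q ^ dim x0 = ?Q ^ (dim x0 - dim (x \<inter> x0)) * ?Q ^ dim (x \<inter> x0)"
    using fd.dim_subset[of "x \<inter> x0" x] fd.dim_subset[of "x \<inter> x0" x0]
    by (simp_all flip: power_add)
  moreover have "?Q ^ dim (x \<inter> x0) \<noteq> 0"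
    using two_le_card_field by simp
  ultimately show ?thesis
    using assms x subspace_x0 subspace_inter[OF x subspace_x0]
    by (simp add: opD4_def card_subspace field_simps)
qed

lemma qq_square: "(qq sc)\<^sup>2 = real CARD('f)"
  by (simp add: qq_def)

text \<open>The exponents of D1 and D2 at x add up to D - 2 dim x, by the Grassmann formula.\<close>

lemma scaled_inverse_opD1_opD2:
  assumes "x \<in> subspaces sc"
  shows "complex_of_real (qq sc ^ Dim sc) * ocomp sc (oinv sc (opD1 sc x0)) (oinv sc (opD2 sc x0)) y x
    = (if y = x then of_real (real CARD('f) ^ dim x) else 0)"
proof -
  let ?q = "qq sc"
  define e1 where "e1 x = (int (Dim sc) - int (dim x0)) - 2 * (int (dim (ssum x x0)) - int (dim x0))" for x
  define e2 where "e2 x = int (dim x0) - 2 * int (dim (x \<inter> x0))" for x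
  have q_pos: "?q > 0"
    using two_le_card_field by (simp add: qq_def)
  have D1: "opD1 sc x0 = diag_op (\<lambda>x. of_real (?q powr e1 x))"
    and D2: "opD2 sc x0 = diag_op (\<lambda>x. of_real (?q powr e2 x))"
    unfolding opD1_def opD2_def diag_op_def e1_def e2_def by simp_all
  have "real (Dim sc) = real (2 * dim x) + e1 x + e2 x"
    using dim_ssum_Int[OF _ subspace_x0, of x] assms by (simp add: e1_def e2_def subspaces_def)
  then have "?q ^ Dim sc = ?q powr real (2 * dim x) * ?q powr e1 x * ?q powr e2 x"
    using q_pos by (simp add: powr_add flip: powr_realpow)
  also have "?q powr real (2 * dim x) = real CARD('f) ^ dim x"
    by (simp only: powr_realpow[OF q_pos] power_mult qq_square)
  finally have "?q ^ Dim sc = real CARD('f) ^ dim x * (?q powr e1 x * ?q powr e2 x)"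
    by simp
  moreover have nonzero: "\<forall>x\<in>subspaces sc. complex_of_real (?q powr e x) \<noteq> 0" for e
    using q_pos by simp
  ultimately show ?thesis
    unfolding D1 D2 oinv_diag_op[OF nonzero] ocomp_diag_op_right[OF assms]
    using q_pos by (simp add: diag_op_def assms)
qed

lemma commutator_opL2_opR2_entry:
  assumes y: "y \<in> subspaces sc" and x: "x \<in> subspaces sc"
  shows "complex_of_real ((qq sc)\<^sup>2 - 1) *
       (ocomp sc (opL2 sc x0) (opR2 sc x0) y x - ocomp sc (opR2 sc x0) (opL2 sc x0) y x)
   = complex_of_real ((qq sc)\<^sup>2 - 1) * opD3 sc x0 x1 y x + opD4 sc x0 y x
     - complex_of_real (qq sc ^ Dim sc) *
         ocomp sc (oinv sc (opD1 sc x0)) (oinv sc (opD2 sc x0)) y x"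
proof (cases "y = x")
  case True
  have "\<not> adjacent x x"
    by (simp add: adjacent_def)
  moreover have "complex_of_real ((real CARD('f) - 1) *
      (real (card (upper_covers x)) - real (card (lower_covers x))))
    = complex_of_real (real CARD('f) ^ (dim x - dim (x \<inter> x0)) + real CARD('f) ^ (dim x0 - dim (x \<inter> x0))
      - 1 - real CARD('f) ^ dim x)"
    using card_upper_minus_lower_covers x by (simp add: subspaces_def)
  ultimately show ?thesis
    unfolding True ocomp_opL2_opR2 ocomp_opR2_opL2 opD3_eq[OF x x] scaled_inverse_opD1_opD2[OF x]
      opD4_diag[OF x] qq_square
    by simp
next
  case False
  have sx: "subspace x" and sy: "subspace y"
    using x y by (simp_all add: subspaces_def)
  show ?thesis
    unfolding ocomp_opL2_opR2 ocomp_opR2_opL2 opD3_eq[OF x y] scaled_inverse_opD1_opD2[OF x]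
      upper_covers_Int[OF sx sy False] lower_covers_Int[OF sx sy False]
    using False by (simp add: opD4_def)
qed

end

theorem mainTheorem16:
  fixes sc :: "'f::{field,finite} \<Rightarrow> 'v::ab_group_add \<Rightarrow> 'v"
    and x0 x1 :: "'v set"
  assumes "vector_space sc"
    and "finite (UNIV :: 'v set)"
    and "x0 \<in> subspaces sc" and "x1 \<in> subspaces sc"
    and "ssum x0 x1 = UNIV" and "x0 \<inter> x1 = {0}"
  shows "\<forall>y\<in>subspaces sc. \<forall>x\<in>subspaces sc.
     complex_of_real ((qq sc)\<^sup>2 - 1) *
       (ocomp sc (opL2 sc x0) (opR2 sc x0) y x - ocomp sc (opR2 sc x0) (opL2 sc x0) y x)
   = complex_of_real ((qq sc)\<^sup>2 - 1) * opD3 sc x0 x1 y x + opD4 sc x0 y x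
     - complex_of_real (qq sc ^ Dim sc) *
         ocomp sc (oinv sc (opD1 sc x0)) (oinv sc (opD2 sc x0)) y x"
proof -
  interpret finite_vector_space_direct_sum sc x0 x1
    using assms
    by (simp add: finite_vector_space_direct_sum_def finite_vector_space_direct_sum_axioms_def
        finite_vector_space_with_subspace_def finite_vector_space_with_subspace_axioms_def
        finite_vector_space_def finite_vector_space_axioms_def subspaces_def)
  show ?thesis
    using commutator_opL2_opR2_entry by blast
qed

end
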